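(* Let $\Gamma$ be a graph with maximum degree $\Delta_\Gamma$, and let $V^*\subseteq V(\Gamma)$ be a random vertex set containing each vertex of $\Gamma$ independently with probability $q\le 1/\Delta_\Gamma$. Then with probability at least $1-\exp\!\big(-q^2e(\Gamma)/200\big)$, the induced subgraph $\Gamma[V^*]$ contains a matching of size at least $q^2e(\Gamma)/20$.
   Context: $e(\Gamma)$ denotes the number of edges of $\Gamma$. *)

theory Defs
  imports "HOL-Probability.Probability"
begin

definition simple_graph :: "'a set \<Rightarrow> 'a set set \<Rightarrow> bool" where
  "simple_graph V E \<longleftrightarrow> finite V \<and> (\<forall>e\<in>E. e \<subseteq> V \<and> card e = 2)"

definition degree :: "'a set set \<Rightarrow> 'a \<Rightarrow> nat" where
  "degree E v = card {e\<in>E. v \<in> e}"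

definition max_degree :: "'a set \<Rightarrow> 'a set set \<Rightarrow> nat" where
  "max_degree V E = Max (insert 0 (degree E ` V))"

definition induced_edges :: "'a set set \<Rightarrow> 'a set \<Rightarrow> 'a set set" where
  "induced_edges E S = {e\<in>E. e \<subseteq> S}"

definition matching :: "'a set set \<Rightarrow> 'a set set \<Rightarrow> bool" where
  "matching E M \<longleftrightarrow> M \<subseteq> E \<and> (\<forall>e\<in>M. \<forall>f\<in>M. e \<noteq> f \<longrightarrow> e \<inter> f = {})"

definition random_subset :: "'a set \<Rightarrow> real \<Rightarrow> 'a set pmf" where
  "random_subset V q = map_pmf (\<lambda>f. {v\<in>V. f v}) (Pi_pmf V False (\<lambda>_. bernoulli_pmf q))"

end

theory Submission
  imports Defs
begin

text \<open>Let \<open>\<nu>(S)\<close> be the matching number of \<open>\<Gamma>[S]\<close> and \<open>e = e(\<Gamma>)\<close>. By induction on \<open>|V|\<close>,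
  \<open>E[2 ^ -\<nu>(V\<^sup>*)] \<le> exp (-q\<^sup>2 e / 16)\<close>: condition on whether a vertex \<open>v\<close> of degree \<open>d\<close> is
  sampled. If it is not, what remains is \<open>\<Gamma> - v\<close> with \<open>e - d\<close> edges. If it is, then with
  probability \<open>1 - (1 - q) ^ d\<close> some neighbour is sampled too and can be matched to \<open>v\<close>,
  independently of the matching on the vertices outside the closed neighbourhood of \<open>v\<close>;
  these still span at least \<open>e - d / q\<close> edges because every neighbour has degree at most
  \<open>1 / q\<close>. Since \<open>2 ^ -\<nu> \<ge> exp (-\<nu>)\<close>, Markov's inequality then bounds
  \<open>P(\<nu>(V\<^sup>*) < q\<^sup>2 e / 20)\<close> by \<open>exp (q\<^sup>2 e / 20 - q\<^sup>2 e / 16)\<close>.\<close>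

lemma expectation_pmf_mono:
  fixes f g :: "_ \<Rightarrow> real"
  assumes "finite (set_pmf p)" "\<And>x. x \<in> set_pmf p \<Longrightarrow> f x \<le> g x"
  shows "measure_pmf.expectation p f \<le> measure_pmf.expectation p g"
  using assms by (intro integral_mono_AE integrable_measure_pmf_finite AE_pmfI) auto

lemma expectation_pmf_cong:
  fixes f g :: "_ \<Rightarrow> real"
  assumes "\<And>x. x \<in> set_pmf p \<Longrightarrow> f x = g x"
  shows "measure_pmf.expectation p f = measure_pmf.expectation p g"
  using assms by (intro integral_cong_AE AE_pmfI) auto

lemma set_pmf_random_subset: "set_pmf (random_subset A q) \<subseteq> Pow A"
  unfolding random_subset_def by auto

lemma finite_set_pmf_random_subset: "finite A \<Longrightarrow> finite (set_pmf (random_subset A q))"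
  using set_pmf_random_subset by (meson finite_Pow_iff finite_subset)

lemma random_subset_insert:
  assumes "finite A" "x \<notin> A"
  shows "random_subset (insert x A) q = map_pmf (\<lambda>(b, S). if b then insert x S else S)
           (pair_pmf (bernoulli_pmf q) (random_subset A q))"
  unfolding random_subset_def using assms
  by (simp add: Pi_pmf_insert pair_map_pmf2 pmf.map_comp o_def case_prod_unfold cong: map_pmf_cong)
     (intro map_pmf_cong refl, auto)

lemma random_subset_Un:
  assumes "finite A" "finite B" "A \<inter> B = {}"
  shows "random_subset (A \<union> B) q = map_pmf (\<lambda>(S, T). S \<union> T)
           (pair_pmf (random_subset A q) (random_subset B q))"
  unfolding random_subset_def using assms
  by (simp add: Pi_pmf_union map_pair[symmetric] pmf.map_comp o_def case_prod_unfold)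
     (intro map_pmf_cong refl, auto)

lemma expectation_pair_pmf:
  fixes f :: "_ \<Rightarrow> real"
  assumes "finite (set_pmf A)" "finite (set_pmf B)"
  shows "measure_pmf.expectation (pair_pmf A B) f =
         measure_pmf.expectation A (\<lambda>a. measure_pmf.expectation B (\<lambda>b. f (a, b)))"
proof -
  have "measure_pmf.expectation (pair_pmf A B) f =
        (\<Sum>(a, b)\<in>set_pmf A \<times> set_pmf B. f (a, b) * (pmf A a * pmf B b))"
    by (subst integral_measure_pmf_real)
       (use assms in \<open>auto simp: pmf_pair case_prod_unfold intro!: sum.cong\<close>)
  also have "\<dots> = (\<Sum>a\<in>set_pmf A. (\<Sum>b\<in>set_pmf B. f (a, b) * pmf B b) * pmf A a)"
    by (subst sum.cartesian_product[symmetric])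
       (simp add: sum_distrib_left sum_distrib_right mult_ac)
  also have "\<dots> = measure_pmf.expectation A (\<lambda>a. measure_pmf.expectation B (\<lambda>b. f (a, b)))"
    using assms by (simp add: integral_measure_pmf_real)
  finally show ?thesis .
qed

lemma expectation_random_subset_insert:
  fixes f :: "_ \<Rightarrow> real"
  assumes "finite A" "x \<notin> A" "0 \<le> q" "q \<le> 1"
  shows "measure_pmf.expectation (random_subset (insert x A) q) f =
         q * measure_pmf.expectation (random_subset A q) (\<lambda>S. f (insert x S)) +
         (1 - q) * measure_pmf.expectation (random_subset A q) f"
proof -
  have "finite (set_pmf (bernoulli_pmf q))"
    by (rule finite_subset[of _ UNIV]) auto
  then show ?thesis
    using assms
    by (simp add: random_subset_insert expectation_pair_pmf finite_set_pmf_random_subset case_prod_unfold)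
qed

lemma expectation_random_subset_Un:
  fixes f :: "_ \<Rightarrow> real"
  assumes "finite A" "finite B" "A \<inter> B = {}"
  shows "measure_pmf.expectation (random_subset (A \<union> B) q) f =
         measure_pmf.expectation (random_subset A q)
           (\<lambda>S. measure_pmf.expectation (random_subset B q) (\<lambda>T. f (S \<union> T)))"
  using assms
  by (simp add: random_subset_Un expectation_pair_pmf finite_set_pmf_random_subset case_prod_unfold)

lemma expectation_random_subset_if_empty:
  fixes a b q :: real
  assumes "finite A" "0 \<le> q" "q \<le> 1"
  shows "measure_pmf.expectation (random_subset A q) (\<lambda>S. if S = {} then a else b)
         = b + (a - b) * (1 - q) ^ card A"
  using assms(1)
proof (induction rule: finite_induct)
  case empty
  then show ?case by (simp add: random_subset_def)
next
  case (insert x A)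
  then show ?case
    using assms(2,3) by (simp add: expectation_random_subset_insert) (simp add: algebra_simps)
qed

definition neighbours :: "'a set set \<Rightarrow> 'a \<Rightarrow> 'a set" where
  "neighbours E v = {u. {v, u} \<in> E}"

lemma simple_graph_finite_edges: "simple_graph V E \<Longrightarrow> finite E"
  unfolding simple_graph_def by (meson PowI finite_Pow_iff finite_subset subsetI)

lemma simple_graph_induced_edges:
  "simple_graph V E \<Longrightarrow> U \<subseteq> V \<Longrightarrow> simple_graph U (induced_edges E U)"
  unfolding simple_graph_def induced_edges_def by (auto intro: finite_subset)

lemma induced_edges_induced_edges:
  "S \<subseteq> U \<Longrightarrow> induced_edges (induced_edges E U) S = induced_edges E S"
  unfolding induced_edges_def by auto

lemma degree_induced_edges_le: "finite E \<Longrightarrow> degree (induced_edges E U) v \<le> degree E v"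
  unfolding degree_def induced_edges_def by (intro card_mono) auto

lemma degree_le_max_degree: "finite V \<Longrightarrow> v \<in> V \<Longrightarrow> degree E v \<le> max_degree V E"
  unfolding max_degree_def by (intro Max_ge) auto

lemma q_mult_degree_le_one_of_max_degree:
  fixes q :: real
  assumes "finite V" "0 \<le> q" "q * max_degree V E \<le> 1"
  shows "\<forall>v\<in>V. q * degree E v \<le> 1"
proof
  fix v assume "v \<in> V"
  then have "q * degree E v \<le> q * max_degree V E"
    using assms(1,2) degree_le_max_degree by (intro mult_left_mono) auto
  then show "q * degree E v \<le> 1"
    using assms(3) by linarith
qed

lemma q_mult_degree_induced_edges_le_one:
  fixes q :: real
  assumes "finite E" "0 \<le> q" "\<forall>v\<in>V. q * degree E v \<le> 1" "U \<subseteq> V"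
  shows "\<forall>u\<in>U. q * degree (induced_edges E U) u \<le> 1"
proof
  fix u assume "u \<in> U"
  have "q * degree (induced_edges E U) u \<le> q * degree E u"
    using degree_induced_edges_le[OF assms(1)] assms(2) by (intro mult_left_mono) auto
  also have "\<dots> \<le> 1"
    using assms(3,4) \<open>u \<in> U\<close> by auto
  finally show "q * degree (induced_edges E U) u \<le> 1" .
qed

lemma edges_at_eq_image_neighbours:
  assumes "simple_graph V E"
  shows "{e\<in>E. v \<in> e} = (\<lambda>u. {v, u}) ` neighbours E v"
proof -
  have "e \<in> (\<lambda>u. {v, u}) ` neighbours E v" if "e \<in> E" "v \<in> e" for e
  proof -
    obtain a b where "e = {a, b}"
      using assms \<open>e \<in> E\<close> by (auto simp: simple_graph_def card_2_iff)
    then obtain u where "e = {v, u}"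
      using \<open>v \<in> e\<close> by auto
    then show ?thesis
      using \<open>e \<in> E\<close> by (auto simp: neighbours_def)
  qed
  then show ?thesis
    by (auto simp: neighbours_def)
qed

lemma degree_eq_card_neighbours:
  assumes "simple_graph V E"
  shows "degree E v = card (neighbours E v)"
proof -
  have "inj_on (\<lambda>u. {v, u}) (neighbours E v)"
    by (auto simp: inj_on_def doubleton_eq_iff)
  then show ?thesis
    unfolding degree_def edges_at_eq_image_neighbours[OF assms] by (rule card_image)
qed

lemma neighbours_subset:
  assumes "simple_graph V E"
  shows "neighbours E v \<subseteq> V - {v}"
  using assms by (auto simp: simple_graph_def neighbours_def)

lemma card_induced_edges_delete_vertex:
  assumes "simple_graph V E"
  shows "card (induced_edges E (V - {v})) = card E - degree E v"
proof -
  have "induced_edges E (V - {v}) = E - {e\<in>E. v \<in> e}"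
    using assms by (auto simp: simple_graph_def induced_edges_def)
  then show ?thesis
    using simple_graph_finite_edges[OF assms]
    by (simp add: card_Diff_subset degree_def)
qed

lemma card_edges_le_delete_closed_neighbourhood:
  assumes "simple_graph V E"
  shows "card E \<le> card (induced_edges E (V - insert v (neighbours E v)))
                  + (\<Sum>u\<in>neighbours E v. degree E u)"
proof -
  let ?N = "neighbours E v" and ?E' = "induced_edges E (V - insert v (neighbours E v))"
  have finE: "finite E"
    using assms by (rule simple_graph_finite_edges)
  have finN: "finite ?N"
    using assms neighbours_subset[OF assms] by (meson finite_Diff finite_subset simple_graph_def)
  have "E - ?E' \<subseteq> (\<Union>u\<in>?N. {e\<in>E. u \<in> e})"
  proof
    fix e assume e: "e \<in> E - ?E'"
    then obtain w where w: "w \<in> e" "w \<in> insert v ?N"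
      using assms by (auto simp: simple_graph_def induced_edges_def)
    show "e \<in> (\<Union>u\<in>?N. {e\<in>E. u \<in> e})"
    proof (cases "w = v")
      case True
      then show ?thesis
        using e w edges_at_eq_image_neighbours[OF assms, of v] by auto
    next
      case False
      then show ?thesis
        using e w by auto
    qed
  qed
  then have "card (E - ?E') \<le> card (\<Union>u\<in>?N. {e\<in>E. u \<in> e})"
    using finE finN by (intro card_mono) auto
  also have "\<dots> \<le> (\<Sum>u\<in>?N. degree E u)"
    unfolding degree_def using finN by (rule card_UN_le)
  finally have "card (E - ?E') \<le> (\<Sum>u\<in>?N. degree E u)" .
  moreover have "card E = card ?E' + card (E - ?E')"
    using finE by (metis card_Diff_subset card_mono induced_edges_def le_add_diff_inverse
      mem_Collect_eq subsetI finite_subset)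
  ultimately show ?thesis
    by linarith
qed

lemma q_mult_card_edges_minus_induced_le_degree:
  fixes q :: real
  assumes G: "simple_graph V E" and "0 \<le> q" and deg: "\<forall>u\<in>V. q * degree E u \<le> 1"
  shows "q * (real (card E) - card (induced_edges E (V - insert v (neighbours E v)))) \<le> degree E v"
proof -
  let ?N = "neighbours E v"
  have "real (card E) \<le> card (induced_edges E (V - insert v ?N)) + (\<Sum>u\<in>?N. degree E u)"
    using card_edges_le_delete_closed_neighbourhood[OF G, of v] by (simp flip: of_nat_sum)
  then have "q * (real (card E) - card (induced_edges E (V - insert v ?N)))
             \<le> q * (\<Sum>u\<in>?N. degree E u)"
    using assms(2) by (intro mult_left_mono) auto
  also have "\<dots> = (\<Sum>u\<in>?N. q * degree E u)"
    by (simp add: sum_distrib_left)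
  also have "\<dots> \<le> (\<Sum>u\<in>?N. 1)"
    using deg neighbours_subset[OF G] by (intro sum_mono) auto
  finally show ?thesis
    by (simp add: degree_eq_card_neighbours[OF G])
qed

definition matching_number :: "'a set set \<Rightarrow> nat" where
  "matching_number E = Max (card ` {M. matching E M})"

lemma finite_matchings: "finite E \<Longrightarrow> finite {M. matching E M}"
  by (rule finite_subset[of _ "Pow E"]) (auto simp: matching_def)

lemma card_le_matching_number: "finite E \<Longrightarrow> matching E M \<Longrightarrow> card M \<le> matching_number E"
  unfolding matching_number_def by (rule Max_ge) (auto simp: finite_matchings)

lemma ex_matching_card_eq_matching_number: "finite E \<Longrightarrow> \<exists>M. matching E M \<and> card M = matching_number E"
proof -
  assume "finite E"
  have "matching E {}"
    by (simp add: matching_def)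
  then have "matching_number E \<in> card ` {M. matching E M}"
    unfolding matching_number_def using \<open>finite E\<close> by (intro Max_in) (auto simp: finite_matchings)
  then show ?thesis
    by auto
qed

lemma matching_number_ge_iff:
  fixes k :: real
  assumes "finite E"
  shows "(\<exists>M. matching E M \<and> k \<le> card M) \<longleftrightarrow> k \<le> matching_number E"
proof
  assume "\<exists>M. matching E M \<and> k \<le> card M"
  then show "k \<le> matching_number E"
    using card_le_matching_number[OF assms] by (meson of_nat_le_iff order_trans)
next
  assume "k \<le> matching_number E"
  then show "\<exists>M. matching E M \<and> k \<le> card M"
    using ex_matching_card_eq_matching_number[OF assms] by auto
qed

lemma induced_matching_card_ge_eq_compl:
  fixes k :: real
  assumes "finite E"
  shows "{S. \<exists>M. matching (induced_edges E S) M \<and> k \<le> card M}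
         = UNIV - {S. matching_number (induced_edges E S) < k}"
proof -
  have "finite (induced_edges E S)" for S
    using assms by (simp add: induced_edges_def)
  then show ?thesis
    using matching_number_ge_iff by (auto simp flip: not_less)
qed

lemma matching_number_mono:
  assumes "finite E'" "E \<subseteq> E'"
  shows "matching_number E \<le> matching_number E'"
proof -
  obtain M where "matching E M" "card M = matching_number E"
    using ex_matching_card_eq_matching_number assms finite_subset by blast
  then have "matching E' M"
    using assms(2) by (auto simp: matching_def)
  then show ?thesis
    using card_le_matching_number[OF assms(1)] \<open>card M = matching_number E\<close> by metis
qed

lemma Suc_matching_number_induced_edges_le:
  assumes "finite E" "e \<in> E" "e \<noteq> {}" "e \<inter> S = {}"
  shows "Suc (matching_number (induced_edges E S)) \<le> matching_number (induced_edges E (e \<union> S))"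
proof -
  obtain M where M: "matching (induced_edges E S) M" "card M = matching_number (induced_edges E S)"
    using ex_matching_card_eq_matching_number[of "induced_edges E S"] assms(1) by (auto simp: induced_edges_def)
  then have "\<forall>f\<in>M. f \<subseteq> S"
    by (auto simp: matching_def induced_edges_def)
  then have "e \<notin> M" and disjoint: "\<forall>f\<in>M. e \<inter> f = {}"
    using assms(3,4) by auto
  have "matching (induced_edges E (e \<union> S)) (insert e M)"
    using M(1) assms(2) disjoint by (auto simp: matching_def induced_edges_def)
  then have "card (insert e M) \<le> matching_number (induced_edges E (e \<union> S))"
    using assms(1) by (intro card_le_matching_number) (auto simp: induced_edges_def)
  moreover have "finite M"
    using M(1) assms(1) by (auto simp: matching_def induced_edges_def intro: finite_subset)
  ultimately show ?thesis
    using M(2) \<open>e \<notin> M\<close> by simp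
qed

lemma exp_minus_le_one_minus_half:
  fixes a :: real
  assumes "0 \<le> a" "a \<le> 1"
  shows "exp (- a) \<le> 1 - a / 2"
proof -
  have "exp (- a) * (1 + a) \<le> exp (- a) * exp a"
    using exp_ge_add_one_self[of a] by (intro mult_left_mono) auto
  then have "exp (- a) * (1 + a) \<le> 1"
    by (simp add: exp_minus)
  moreover have "1 \<le> (1 - a / 2) * (1 + a)"
    using assms mult_nonneg_nonneg[of a "1 - a"] by (simp add: algebra_simps)
  ultimately have "exp (- a) * (1 + a) \<le> (1 - a / 2) * (1 + a)"
    by linarith
  then show ?thesis
    using assms(1) by (simp add: mult_le_cancel_right)
qed

lemma one_minus_pow_le_exp:
  fixes q :: real
  assumes "q \<le> 1"
  shows "(1 - q) ^ d \<le> exp (- (q * d))"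
proof -
  have "(1 - q) ^ d \<le> exp (- q) ^ d"
    using exp_minus_ge[of q] assms by (intro power_mono) auto
  then show ?thesis
    by (simp add: exp_of_nat_mult[symmetric] mult.commute)
qed

lemma half_plus_half_one_minus_pow_le:
  fixes q :: real
  assumes "0 \<le> q" "q \<le> 1" "q * d \<le> 1"
  shows "1/2 + (1 - q) ^ d / 2 \<le> 1 - q * d / 4"
  using one_minus_pow_le_exp[OF assms(2), of d] exp_minus_le_one_minus_half[of "q * d"] assms
  by simp

text \<open>In the induction, \<open>m\<^sub>1\<close> and \<open>m\<^sub>2\<close> are the numbers of edges left after deleting \<open>v\<close>,
  resp. \<open>v\<close> together with its \<open>d\<close> neighbours.\<close>
lemma matching_potential_recursion_le:
  fixes q m m1 m2 :: real
  assumes "0 \<le> q" "q \<le> 1" "q * d \<le> 1" "m1 = m - d" "q\<^sup>2 * (m - m2) \<le> q * d"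
  shows "q * ((1/2 + (1 - q) ^ d / 2) * exp (- (q\<^sup>2 * m2 / 16)))
           + (1 - q) * exp (- (q\<^sup>2 * m1 / 16))
         \<le> exp (- (q\<^sup>2 * m / 16))"
proof -
  define a where "a = q * d"
  define X where "X = exp (- (q\<^sup>2 * m / 16))"
  have a: "0 \<le> a" "a \<le> 1" "q * a \<le> 1"
    using assms mult_mono[of q 1 a 1] by (auto simp: a_def)
  have "exp (- (q\<^sup>2 * m1 / 16)) = X * exp (q * a / 16)"
    unfolding X_def a_def assms(4) by (simp add: exp_add[symmetric] power2_eq_square) (simp add: field_simps)
  also have "\<dots> \<le> X * (1 + q * a / 8)"
    using real_exp_bound_lemma[of "q * a / 16"] a assms(1) by (simp add: X_def mult.commute)
  finally have 1: "exp (- (q\<^sup>2 * m1 / 16)) \<le> X * (1 + q * a / 8)" .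
  have "exp (- (q\<^sup>2 * m2 / 16)) \<le> X * exp (a / 16)"
    using assms(5) unfolding X_def a_def by (simp add: exp_add[symmetric] algebra_simps)
  also have "\<dots> \<le> X * (1 + a / 8)"
    using real_exp_bound_lemma[of "a / 16"] a by (simp add: X_def)
  finally have 2: "exp (- (q\<^sup>2 * m2 / 16)) \<le> X * (1 + a / 8)" .
  have 3: "1/2 + (1 - q) ^ d / 2 \<le> 1 - a / 4"
    unfolding a_def using half_plus_half_one_minus_pow_le assms(1-3) .
  have X: "0 < X"
    by (simp add: X_def)
  have "(1 - q) * exp (- (q\<^sup>2 * m1 / 16)) \<le> (1 - q) * (X * (1 + q * a / 8))"
    using 1 assms(2) by (intro mult_left_mono) auto
  moreover have "(1/2 + (1 - q) ^ d / 2) * exp (- (q\<^sup>2 * m2 / 16)) \<le> (1 - a / 4) * (X * (1 + a / 8))"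
    using 2 3 X a by (intro mult_mono) auto
  then have "q * ((1/2 + (1 - q) ^ d / 2) * exp (- (q\<^sup>2 * m2 / 16)))
             \<le> q * ((1 - a / 4) * (X * (1 + a / 8)))"
    using assms(1) by (rule mult_left_mono)
  moreover have "(1 - q) * (X * (1 + q * a / 8)) + q * ((1 - a / 4) * (X * (1 + a / 8)))
      = X - X * (q\<^sup>2 * a / 8 + q * a\<^sup>2 / 32)"
    by (simp add: field_simps power2_eq_square)
  moreover have "0 \<le> X * (q\<^sup>2 * a / 8 + q * a\<^sup>2 / 32)"
    using X a assms(1) by simp
  ultimately have "q * ((1/2 + (1 - q) ^ d / 2) * exp (- (q\<^sup>2 * m2 / 16)))
           + (1 - q) * exp (- (q\<^sup>2 * m1 / 16)) \<le> X"
    by linarith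
  then show ?thesis
    unfolding X_def .
qed

lemma half_pow_matching_number_insert_le:
  assumes "finite E" "T \<subseteq> neighbours E v" "v \<notin> U" "T \<inter> U = {}"
  shows "(1/2::real) ^ matching_number (induced_edges E (insert v (T \<union> U)))
         \<le> (if T = {} then 1 else 1/2) * (1/2) ^ matching_number (induced_edges E U)"
proof (cases "T = {}")
  case True
  have "matching_number (induced_edges E U) \<le> matching_number (induced_edges E (insert v U))"
    using assms(1) by (intro matching_number_mono) (auto simp: induced_edges_def)
  then show ?thesis
    using True by (simp add: power_decreasing)
next
  case False
  then obtain u where u: "u \<in> T" "{v, u} \<in> E"
    using assms(2) by (auto simp: neighbours_def)
  have "Suc (matching_number (induced_edges E U)) \<le> matching_number (induced_edges E ({v, u} \<union> U))"
    using u assms by (intro Suc_matching_number_induced_edges_le) auto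
  also have "\<dots> \<le> matching_number (induced_edges E (insert v (T \<union> U)))"
    using assms(1) u(1) by (intro matching_number_mono) (auto simp: induced_edges_def)
  finally have "(1/2::real) ^ matching_number (induced_edges E (insert v (T \<union> U)))
                \<le> (1/2) ^ Suc (matching_number (induced_edges E U))"
    by (intro power_decreasing) auto
  then show ?thesis
    using False by simp
qed

lemma expectation_half_pow_matching_number_insert_le:
  assumes G: "simple_graph V E" and "0 \<le> q" "q \<le> 1"
  shows "measure_pmf.expectation (random_subset (V - {v}) q)
           (\<lambda>S. (1/2::real) ^ matching_number (induced_edges E (insert v S)))
         \<le> (1/2 + (1 - q) ^ degree E v / 2) *
           measure_pmf.expectation (random_subset (V - insert v (neighbours E v)) q)
             (\<lambda>U. (1/2::real) ^ matching_number (induced_edges E U))"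
    (is "?lhs \<le> _ * measure_pmf.expectation ?W ?g")
proof -
  let ?N = "neighbours E v"
  define c :: "'a set \<Rightarrow> real" where "c T = (if T = {} then 1 else 1/2)" for T
  have finE: "finite E"
    using G by (rule simple_graph_finite_edges)
  have fin: "finite ?N" "finite (V - insert v ?N)"
    using G neighbours_subset[OF G] by (auto simp: simple_graph_def intro: finite_subset)
  have "V - {v} = ?N \<union> (V - insert v ?N)"
    using neighbours_subset[OF G] by auto
  then have "?lhs = measure_pmf.expectation (random_subset ?N q)
      (\<lambda>T. measure_pmf.expectation ?W
         (\<lambda>U. (1/2) ^ matching_number (induced_edges E (insert v (T \<union> U)))))"
    using fin by (simp only:) (rule expectation_random_subset_Un, auto)
  also have "\<dots> \<le> measure_pmf.expectation (random_subset ?N q)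
      (\<lambda>T. measure_pmf.expectation ?W (\<lambda>U. c T * ?g U))"
    using fin set_pmf_random_subset unfolding c_def
    by (intro expectation_pmf_mono finite_set_pmf_random_subset half_pow_matching_number_insert_le
        finE) (auto dest!: subsetD)
  also have "\<dots> = measure_pmf.expectation (random_subset ?N q) c * measure_pmf.expectation ?W ?g"
    by simp
  also have "measure_pmf.expectation (random_subset ?N q) c = 1/2 + (1 - q) ^ degree E v / 2"
    unfolding c_def degree_eq_card_neighbours[OF G]
    using expectation_random_subset_if_empty[OF fin(1) assms(2,3), of 1 "1/2"] by simp
  finally show ?thesis .
qed

lemma expectation_half_pow_matching_number_induced_edges:
  "measure_pmf.expectation (random_subset U q)
     (\<lambda>S. (1/2::real) ^ matching_number (induced_edges (induced_edges E U) S))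
   = measure_pmf.expectation (random_subset U q)
     (\<lambda>S. (1/2::real) ^ matching_number (induced_edges E S))"
proof (rule expectation_pmf_cong)
  fix S assume "S \<in> set_pmf (random_subset U q)"
  then have "S \<subseteq> U"
    using set_pmf_random_subset by blast
  then show "(1/2::real) ^ matching_number (induced_edges (induced_edges E U) S)
             = (1/2) ^ matching_number (induced_edges E S)"
    by (simp add: induced_edges_induced_edges)
qed

lemma expectation_half_pow_matching_number_le_step:
  fixes q :: real
  assumes G: "simple_graph V E" and q: "0 \<le> q" "q \<le> 1"
    and deg: "\<forall>v\<in>V. q * degree E v \<le> 1" and v: "v \<in> V"
    and IH: "\<And>U. U \<subset> V \<Longrightarrow>
      measure_pmf.expectation (random_subset U q) (\<lambda>S. (1/2::real) ^ matching_number (induced_edges E S))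
      \<le> exp (- (q\<^sup>2 * card (induced_edges E U) / 16))"
  shows "measure_pmf.expectation (random_subset V q)
           (\<lambda>S. (1/2::real) ^ matching_number (induced_edges E S))
         \<le> exp (- (q\<^sup>2 * card E / 16))"
proof -
  let ?\<Phi> = "\<lambda>S. (1/2::real) ^ matching_number (induced_edges E S)"
  let ?W = "V - insert v (neighbours E v)"
  define d where "d = degree E v"
  have qd: "q * d \<le> 1"
    using deg v by (simp add: d_def)
  have m1: "real (card (induced_edges E (V - {v}))) = real (card E) - real d"
    using card_induced_edges_delete_vertex[OF G, of v] card_mono[OF simple_graph_finite_edges[OF G]]
    unfolding d_def degree_def by (simp add: of_nat_diff)
  have m2: "q\<^sup>2 * (real (card E) - real (card (induced_edges E ?W))) \<le> q * d"
    using q_mult_card_edges_minus_induced_le_degree[OF G q(1) deg, of v] q(1)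
    unfolding d_def power2_eq_square mult.assoc by (intro mult_left_mono) auto
  have "measure_pmf.expectation (random_subset (V - {v}) q) (\<lambda>S. ?\<Phi> (insert v S))
        \<le> (1/2 + (1 - q) ^ d / 2) * measure_pmf.expectation (random_subset ?W q) ?\<Phi>"
    unfolding d_def by (rule expectation_half_pow_matching_number_insert_le[OF G q])
  also have "\<dots> \<le> (1/2 + (1 - q) ^ d / 2) * exp (- (q\<^sup>2 * card (induced_edges E ?W) / 16))"
    using IH[of ?W] v q by (intro mult_left_mono) auto
  finally have sampled: "measure_pmf.expectation (random_subset (V - {v}) q) (\<lambda>S. ?\<Phi> (insert v S))
        \<le> (1/2 + (1 - q) ^ d / 2) * exp (- (q\<^sup>2 * card (induced_edges E ?W) / 16))" .
  have "measure_pmf.expectation (random_subset V q) ?\<Phi>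
        = q * measure_pmf.expectation (random_subset (V - {v}) q) (\<lambda>S. ?\<Phi> (insert v S))
          + (1 - q) * measure_pmf.expectation (random_subset (V - {v}) q) ?\<Phi>"
    using v G q expectation_random_subset_insert[of "V - {v}" v q ?\<Phi>]
    by (simp add: insert_absorb simple_graph_def)
  also have "\<dots> \<le> q * ((1/2 + (1 - q) ^ d / 2) * exp (- (q\<^sup>2 * card (induced_edges E ?W) / 16)))
                  + (1 - q) * exp (- (q\<^sup>2 * card (induced_edges E (V - {v})) / 16))"
    using sampled IH[of "V - {v}"] v q by (intro add_mono mult_left_mono) auto
  also have "\<dots> \<le> exp (- (q\<^sup>2 * card E / 16))"
    by (rule matching_potential_recursion_le[OF q qd m1 m2])
  finally show ?thesis .
qed

lemma expectation_half_pow_matching_number_le: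
  fixes q :: real
  assumes "simple_graph V E" "0 \<le> q" "q \<le> 1" "\<forall>v\<in>V. q * degree E v \<le> 1"
  shows "measure_pmf.expectation (random_subset V q)
           (\<lambda>S. (1/2::real) ^ matching_number (induced_edges E S))
         \<le> exp (- (q\<^sup>2 * card E / 16))"
  using assms
proof (induction "card V" arbitrary: V E rule: less_induct)
  case less
  note G = less.prems(1)
  have finV: "finite V"
    using G by (simp add: simple_graph_def)
  show ?case
  proof (cases "V = {}")
    case True
    then have "E = {}"
      using G by (auto simp: simple_graph_def)
    have "measure_pmf.expectation (random_subset V q)
            (\<lambda>S. (1/2::real) ^ matching_number (induced_edges E S))
          \<le> measure_pmf.expectation (random_subset V q) (\<lambda>_. 1)"
      using finV by (intro expectation_pmf_mono finite_set_pmf_random_subset) (auto simp: power_le_one)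
    then show ?thesis
      using \<open>E = {}\<close> by simp
  next
    case False
    then obtain v where "v \<in> V"
      by blast
    then show ?thesis
    proof (rule expectation_half_pow_matching_number_le_step[OF less.prems])
      fix U assume "U \<subset> V"
      then show "measure_pmf.expectation (random_subset U q)
                   (\<lambda>S. (1/2::real) ^ matching_number (induced_edges E S))
                 \<le> exp (- (q\<^sup>2 * card (induced_edges E U) / 16))"
        using less.hyps[of U "induced_edges E U"] less.prems finV psubset_card_mono[of V U]
          simple_graph_induced_edges[OF G, of U] simple_graph_finite_edges[OF G]
          q_mult_degree_induced_edges_le_one[of E q V U]
        by (simp add: expectation_half_pow_matching_number_induced_edges psubset_imp_subset)
    qed
  qed
qed

lemma prob_less_le_exp_mult_expectation_half_pow:
  fixes f :: "'b \<Rightarrow> nat" and k :: real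
  shows "measure_pmf.prob p {x. f x < k} \<le> exp k * measure_pmf.expectation p (\<lambda>x. (1/2) ^ f x)"
proof -
  have pointwise: "indicator {x. f x < k} x \<le> exp k * (1/2::real) ^ f x" for x
  proof (cases "f x < k")
    case True
    have "1 \<le> (exp 1 / 2 :: real) ^ f x"
      using exp_ge_add_one_self[of 1] by (intro one_le_power) simp
    also have "\<dots> = exp (real (f x)) * (1/2) ^ f x"
      using exp_of_nat_mult[of "f x" "1::real"] by (simp add: power_divide)
    also have "\<dots> \<le> exp k * (1/2) ^ f x"
      using True by (intro mult_right_mono) auto
    finally show ?thesis
      using True by simp
  qed simp
  have "integrable (measure_pmf p) (\<lambda>x. (1/2::real) ^ f x)"
    by (intro measure_pmf.integrable_const_bound[where B=1]) (auto simp: power_le_one)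
  moreover have "integrable (measure_pmf p) (indicator {x. f x < k} :: _ \<Rightarrow> real)"
    by (intro measure_pmf.integrable_const_bound[where B=1]) auto
  ultimately have "measure_pmf.expectation p (indicator {x. f x < k})
             \<le> measure_pmf.expectation p (\<lambda>x. exp k * (1/2) ^ f x)"
    using pointwise by (intro integral_mono) auto
  then show ?thesis
    by simp
qed

theorem lemma7p2:
  fixes V :: "'a set" and E :: "'a set set" and q :: real
  assumes "simple_graph V E"
    and "0 \<le> q" and "q \<le> 1"
    and "q * real (max_degree V E) \<le> 1"
  shows "measure_pmf.prob (random_subset V q)
           {S. \<exists>M. matching (induced_edges E S) M \<and>
                    real (card M) \<ge> q\<^sup>2 * real (card E) / 20}
         \<ge> 1 - exp (- (q\<^sup>2 * real (card E) / 200))"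
proof -
  let ?p = "random_subset V q" and ?k = "q\<^sup>2 * real (card E) / 20"
  let ?\<nu> = "\<lambda>S. matching_number (induced_edges E S)"
  have finV: "finite V" and finE: "finite E"
    using assms(1) simple_graph_finite_edges by (auto simp: simple_graph_def)
  have "measure_pmf.prob ?p {S. ?\<nu> S < ?k} \<le> exp ?k * measure_pmf.expectation ?p (\<lambda>S. (1/2) ^ ?\<nu> S)"
    by (rule prob_less_le_exp_mult_expectation_half_pow)
  also have "\<dots> \<le> exp ?k * exp (- (q\<^sup>2 * card E / 16))"
    using expectation_half_pow_matching_number_le[OF assms(1-3)]
      q_mult_degree_le_one_of_max_degree[OF finV assms(2,4)] by simp
  also have "\<dots> \<le> exp (- (q\<^sup>2 * real (card E) / 200))"
    by (simp add: exp_add[symmetric])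
  finally show ?thesis
    unfolding induced_matching_card_ge_eq_compl[OF finE]
    using measure_pmf.prob_compl[of "{S. ?\<nu> S < ?k}" ?p] by simp
qed

end
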